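(* Consider the two-player non-cooperative pricing game between two multi-homing mobile devices (MMD relays) $r_1,r_2$, in which the strategy of player $r_i$ is its charging price $p_{r_i}\in[0,+\infty)$ and, with the offered bandwidths $\omega_1,\omega_2>0$ held fixed, the utility of player $r_i$ ($i\in\{1,2\}$, $j\neq i$) is $$U_i(p_{r_i},p_{r_j}) \;=\; p_{r_i}\cdot \frac{n}{1+2^{\,p_{r_i}-p_{r_j}}\,\dfrac{\omega_j Y_j}{\omega_i Y_i}} \;-\; c_i\,\omega_i .$$ Then this game has a unique Nash equilibrium.
   Context: Here $n>0$ is the total number of ordinary mobile devices (OMDs), and the fraction expression is the number of OMDs attached to $r_i$ at the evolutionary equilibrium of the OMDs' relay-selection game. $c_i\ge 0$ is the relay cost of $r_i$ per unit bandwidth. $Y_i=\max\{\tau_i,b_i\}>0$ with $b_i=1+SNR_{s_i d_i}$, $\tau_i=1+SNR_{s_i d_i}+SNR_{s_i r_i d_i}$, $SNR_{s_i d_i}=P|h_{s_id_i}|^2/\sigma^2$, $SNR_{s_ir_id_i}=\frac{P^2|h_{s_ir_i}|^2|h_{r_id_i}|^2}{\sigma^2(\sigma^2+P|h_{s_ir_i}|^2+P|h_{r_id_i}|^2)}$ (transmit power $P>0$, noise variance $\sigma^2>0$, channel gains $h$ between source $s_i$, relay $r_i$, destination $d_i$). A Nash equilibrium is a pair $(p_{r_1}^*,p_{r_2}^* )$ such that for each $i$, $U_i(p_{r_i}^*,p_{r_j}^* )\ge U_i(p_{r_i},p_{r_j}^* )$ for all $p_{r_i}\ge 0$. *)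

theory Defs
  imports Complex_Main
begin

definition snr_direct :: "real \<Rightarrow> real \<Rightarrow> complex \<Rightarrow> real" where
  "snr_direct P \<sigma>2 h_sd = P * (cmod h_sd)^2 / \<sigma>2"

definition snr_relay :: "real \<Rightarrow> real \<Rightarrow> complex \<Rightarrow> complex \<Rightarrow> real" where
  "snr_relay P \<sigma>2 h_sr h_rd =
     P^2 * (cmod h_sr)^2 * (cmod h_rd)^2 /
     (\<sigma>2 * (\<sigma>2 + P * (cmod h_sr)^2 + P * (cmod h_rd)^2))"

definition Yval :: "real \<Rightarrow> real \<Rightarrow> complex \<Rightarrow> complex \<Rightarrow> complex \<Rightarrow> real" where
  "Yval P \<sigma>2 h_sd h_sr h_rd =
     max (1 + snr_direct P \<sigma>2 h_sd + snr_relay P \<sigma>2 h_sr h_rd)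
         (1 + snr_direct P \<sigma>2 h_sd)"

definition utility :: "real \<Rightarrow> real \<Rightarrow> real \<Rightarrow> real \<Rightarrow> real \<Rightarrow> real \<Rightarrow> real \<Rightarrow> real \<Rightarrow> real" where
  "utility n c_i \<omega>_i Y_i \<omega>_j Y_j p_i p_j =
     p_i * (n / (1 + 2 powr (p_i - p_j) * ((\<omega>_j * Y_j) / (\<omega>_i * Y_i)))) - c_i * \<omega>_i"

definition is_NE :: "(real \<Rightarrow> real \<Rightarrow> real) \<Rightarrow> (real \<Rightarrow> real \<Rightarrow> real) \<Rightarrow> real \<times> real \<Rightarrow> bool" where
  "is_NE U1 U2 pp \<longleftrightarrow>
     (let p1 = fst pp; p2 = snd pp in
       p1 \<ge> 0 \<and> p2 \<ge> 0 \<and>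
       (\<forall>p\<ge>0. U1 p1 p2 \<ge> U1 p p2) \<and>
       (\<forall>p\<ge>0. U2 p2 p1 \<ge> U2 p p1))"

end

theory Submission
  imports Defs
begin

text \<open>Writing 2 powr x = exp (k x) with k = ln 2, each utility is a positive multiple of the
  revenue p / (1 + r exp (k (p - q))) minus a constant. Since exp u > 1 + u for u \<noteq> 0, this
  revenue is strictly maximised over p \<ge> 0 exactly at the solution of the first-order condition
  r exp (k (p - q)) (k p - 1) = 1, which exists by the intermediate value theorem. So equilibria
  are the common solutions of both players' first-order conditions. With t = r exp (k (p1 - p2))
  these read k p1 = 1 + 1/t and k p2 = 1 + t, so d = k (p1 - p2) must be a zero of the strictly
  increasing function d + r exp d - 1 / (r exp d), and that zero determines both prices.\<close>

definition revenue :: "real \<Rightarrow> real \<Rightarrow> real \<Rightarrow> real \<Rightarrow> real" where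
  "revenue k r q p = p / (1 + r * exp (k * (p - q)))"

definition price_foc :: "real \<Rightarrow> real \<Rightarrow> real \<Rightarrow> real \<Rightarrow> bool" where
  "price_foc k r q p \<longleftrightarrow> r * exp (k * (p - q)) * (k * p - 1) = 1"

lemma revenue_lt_at_price_foc:
  assumes k: "k > 0" and r: "r > 0" and foc: "price_foc k r q ps" and "p \<noteq> ps"
  shows "revenue k r q p < revenue k r q ps"
proof -
  define B where "B = r * exp (k * (ps - q))"
  define u where "u = k * (p - ps)"
  have B: "B > 0" using r by (simp add: B_def)
  have B_kps: "B * (k * ps) = 1 + B"
    using foc by (simp add: price_foc_def B_def algebra_simps)
  have "u \<noteq> 0" using k \<open>p \<noteq> ps\<close> by (simp add: u_def)
  then have "B * (1 + u) < B * exp u"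
    using B exp_minus_greater[of "-u"] by simp
  then have "B * (k * p) < 1 + B * exp u"
    using B_kps by (simp add: u_def algebra_simps)
  then have "(B * (k * p)) * (1 + B) < (1 + B * exp u) * (1 + B)"
    using B by (intro mult_strict_right_mono) auto
  also have "\<dots> = (B * (k * ps)) * (1 + B * exp u)"
    using B_kps by simp
  finally have "(B * k) * (p * (1 + B)) < (B * k) * (ps * (1 + B * exp u))"
    by (simp add: algebra_simps)
  then have "p * (1 + B) < ps * (1 + B * exp u)"
    using B k by simp
  moreover have "0 < 1 + B * exp u"
    using B by (simp add: add_pos_pos)
  ultimately have "p / (1 + B * exp u) < ps / (1 + B)"
    using B by (simp add: field_simps)
  moreover have "revenue k r q p = p / (1 + B * exp u)" "revenue k r q ps = ps / (1 + B)"
    by (simp_all add: revenue_def B_def u_def algebra_simps flip: exp_add)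
  ultimately show ?thesis
    by simp
qed

lemma price_foc_exists:
  assumes k: "k > 0" and r: "r > 0"
  shows "\<exists>p\<ge>0. price_foc k r q p"
proof -
  define \<phi> where "\<phi> p = r * exp (k * (p - q)) * (k * p - 1)" for p
  define b where "b = 2 / k + \<bar>q\<bar> + \<bar>ln r\<bar> / k"
  have lower: "1 / k \<le> b" and kb: "k * b - 1 \<ge> 1"
    using k by (simp_all add: b_def field_simps)
  have "k * (b - q) = 2 + k * (\<bar>q\<bar> - q) + \<bar>ln r\<bar>"
    using k by (simp add: b_def field_simps)
  moreover have "k * (\<bar>q\<bar> - q) \<ge> 0"
    using k by simp
  ultimately have "k * (b - q) \<ge> - ln r"
    by linarith
  then have "exp (k * (b - q)) \<ge> 1 / r"
    using r by (metis exp_le_cancel_iff exp_ln exp_minus inverse_eq_divide)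
  then have "r * exp (k * (b - q)) \<ge> 1"
    using r by (simp add: field_simps)
  then have "1 * 1 \<le> \<phi> b"
    using kb unfolding \<phi>_def by (intro mult_mono) auto
  moreover have "\<phi> (1 / k) \<le> 1"
    using k by (simp add: \<phi>_def)
  moreover have "continuous_on {1 / k..b} \<phi>"
    unfolding \<phi>_def by (intro continuous_intros)
  ultimately obtain p where p: "1 / k \<le> p" "\<phi> p = 1"
    using IVT'[of \<phi> "1 / k" 1 b] lower by auto
  moreover have "0 < 1 / k"
    using k by simp
  ultimately have "0 \<le> p"
    by linarith
  with p(2) show ?thesis
    unfolding price_foc_def \<phi>_def by blast
qed

lemma revenue_maximal_iff_price_foc:
  assumes k: "k > 0" and r: "r > 0" and "p0 \<ge> 0"
  shows "(\<forall>p\<ge>0. revenue k r q p \<le> revenue k r q p0) \<longleftrightarrow> price_foc k r q p0"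
proof
  assume max: "\<forall>p\<ge>0. revenue k r q p \<le> revenue k r q p0"
  obtain ps where "ps \<ge> 0" "price_foc k r q ps"
    using price_foc_exists[OF k r] by blast
  with max show "price_foc k r q p0"
    using revenue_lt_at_price_foc[OF k r, of q ps p0] by force
next
  assume "price_foc k r q p0"
  then show "\<forall>p\<ge>0. revenue k r q p \<le> revenue k r q p0"
    using revenue_lt_at_price_foc[OF k r] by (metis order.order_iff_strict)
qed

lemma price_foc_pair_iff:
  assumes r: "r > 0"
  shows "price_foc k r p2 p1 \<and> price_foc k (1 / r) p1 p2 \<longleftrightarrow>
    k * p1 = 1 + 1 / (r * exp (k * (p1 - p2))) \<and> k * p2 = 1 + r * exp (k * (p1 - p2))"
proof -
  define t where "t = r * exp (k * (p1 - p2))"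
  have t: "t > 0"
    using r by (simp add: t_def)
  have "exp (k * (p2 - p1)) = 1 / exp (k * (p1 - p2))"
    by (simp add: exp_minus_inverse exp_add[symmetric] field_simps)
  then have "1 / r * exp (k * (p2 - p1)) = 1 / t"
    by (simp add: t_def)
  then show ?thesis
    using t unfolding price_foc_def t_def[symmetric] by (auto simp: field_simps)
qed

lemma price_gap_strict_mono:
  fixes r :: real
  assumes "r > 0"
  shows "strict_mono (\<lambda>d. d + r * exp d - 1 / (r * exp d))"
proof (rule strict_monoI)
  fix d d' :: real
  assume "d < d'"
  moreover have "r * exp d < r * exp d'"
    using assms \<open>d < d'\<close> by simp
  moreover have "1 / (r * exp d') < 1 / (r * exp d)"
    using assms \<open>r * exp d < r * exp d'\<close> by (intro divide_strict_left_mono) auto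
  ultimately show "d + r * exp d - 1 / (r * exp d) < d' + r * exp d' - 1 / (r * exp d')"
    by linarith
qed

lemma price_gap_zero_exists:
  fixes r :: real
  assumes r: "r > 0"
  shows "\<exists>d. d + r * exp d - 1 / (r * exp d) = 0"
proof -
  define G where "G d = d + r * exp d - 1 / (r * exp d)" for d
  have "r * exp (- r) \<le> r" "0 \<le> 1 / (r * exp (- r))"
    using r mult_left_le[of "exp (- r)" r] by simp_all
  then have left: "G (- r) \<le> 0"
    unfolding G_def by linarith
  have "1 / (r * exp (1 / r)) \<le> 1 / r" "0 \<le> r * exp (1 / r)"
    using r by (auto intro!: divide_left_mono simp: mult_le_cancel_left1)
  then have right: "0 \<le> G (1 / r)"
    unfolding G_def by linarith
  have "- r \<le> 1 / r"
    using r by (smt (verit) divide_pos_pos)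
  moreover have "continuous_on {- r..1 / r} G"
    unfolding G_def using r by (intro continuous_intros) auto
  ultimately show ?thesis
    using IVT'[of G "- r" 0 "1 / r", OF left right] unfolding G_def by blast
qed

lemma price_foc_pair_unique:
  assumes k: "k > 0" and r: "r > 0"
  shows "\<exists>!pp. fst pp \<ge> 0 \<and> snd pp \<ge> 0 \<and>
    price_foc k r (snd pp) (fst pp) \<and> price_foc k (1 / r) (fst pp) (snd pp)"
proof -
  define G where "G = (\<lambda>d. d + r * exp d - 1 / (r * exp d))"
  have G_mono: "strict_mono G"
    unfolding G_def by (rule price_gap_strict_mono[OF r])
  obtain d where d: "G d = 0"
    using price_gap_zero_exists[OF r] unfolding G_def by blast
  define p1 where "p1 = (1 + 1 / (r * exp d)) / k"
  define p2 where "p2 = (1 + r * exp d) / k"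
  have "k * (p1 - p2) = (1 + 1 / (r * exp d)) - (1 + r * exp d)"
    using k by (simp add: p1_def p2_def flip: diff_divide_distrib)
  also have "\<dots> = d"
    using d by (simp add: G_def)
  finally have "k * (p1 - p2) = d" .
  then have sol: "price_foc k r p2 p1 \<and> price_foc k (1 / r) p1 p2"
    unfolding price_foc_pair_iff[OF r] using k by (simp add: p1_def p2_def)
  have nonneg: "p1 \<ge> 0" "p2 \<ge> 0"
    using k r by (simp_all add: p1_def p2_def)
  show ?thesis
  proof (rule ex1I[of _ "(p1, p2)"])
    show "fst (p1, p2) \<ge> 0 \<and> snd (p1, p2) \<ge> 0 \<and>
      price_foc k r (snd (p1, p2)) (fst (p1, p2)) \<and> price_foc k (1 / r) (fst (p1, p2)) (snd (p1, p2))"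
      using sol nonneg by simp
  next
    fix pp :: "real \<times> real"
    assume "fst pp \<ge> 0 \<and> snd pp \<ge> 0 \<and>
      price_foc k r (snd pp) (fst pp) \<and> price_foc k (1 / r) (fst pp) (snd pp)"
    then have eqs: "k * fst pp = 1 + 1 / (r * exp (k * (fst pp - snd pp)))"
      "k * snd pp = 1 + r * exp (k * (fst pp - snd pp))"
      unfolding price_foc_pair_iff[OF r] by auto
    moreover have "k * (fst pp - snd pp) = k * fst pp - k * snd pp"
      by (simp add: right_diff_distrib)
    ultimately have "G (k * (fst pp - snd pp)) = G d"
      using d unfolding G_def by linarith
    then have "k * (fst pp - snd pp) = d"
      using strict_mono_eq[OF G_mono] by simp
    note eqs_d = eqs[unfolded this]
    have "fst pp = (k * fst pp) / k" "snd pp = (k * snd pp) / k"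
      using k by simp_all
    then show "pp = (p1, p2)"
      unfolding p1_def p2_def eqs_d by (simp add: prod_eq_iff)
  qed
qed

lemma Yval_pos: "P > 0 \<Longrightarrow> \<sigma>2 > 0 \<Longrightarrow> Yval P \<sigma>2 h_sd h_sr h_rd > 0"
  by (simp add: Yval_def snr_direct_def max.strict_coboundedI2 add_pos_nonneg)

lemma utility_eq_revenue:
  "utility n c \<omega> Y \<omega>' Y' p q = n * revenue (ln 2) ((\<omega>' * Y') / (\<omega> * Y)) q p - c * \<omega>"
  by (simp add: utility_def revenue_def powr_def mult.commute)

theorem theorem2:
  fixes n :: nat and P \<sigma>2 c1 c2 \<omega>1 \<omega>2 :: real
    and h_s1d1 h_s1r1 h_r1d1 h_s2d2 h_s2r2 h_r2d2 :: complex
  assumes "n > 0" and "P > 0" and "\<sigma>2 > 0"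
    and "c1 \<ge> 0" and "c2 \<ge> 0" and "\<omega>1 > 0" and "\<omega>2 > 0"
  defines "Y1 \<equiv> Yval P \<sigma>2 h_s1d1 h_s1r1 h_r1d1"
    and "Y2 \<equiv> Yval P \<sigma>2 h_s2d2 h_s2r2 h_r2d2"
  shows "\<exists>!pp. is_NE (utility (real n) c1 \<omega>1 Y1 \<omega>2 Y2)
                       (utility (real n) c2 \<omega>2 Y2 \<omega>1 Y1) pp"
proof -
  define k :: real where "k = ln 2"
  define r where "r = (\<omega>2 * Y2) / (\<omega>1 * Y1)"
  have k: "k > 0"
    by (simp add: k_def)
  have "Y1 > 0" "Y2 > 0"
    unfolding Y1_def Y2_def using assms(2,3) by (simp_all add: Yval_pos)
  then have r: "r > 0" and r_inv: "(\<omega>1 * Y1) / (\<omega>2 * Y2) = 1 / r"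
    using assms(6,7) by (simp_all add: r_def)
  have r_inv_pos: "1 / r > 0"
    using r by simp
  have "is_NE (utility (real n) c1 \<omega>1 Y1 \<omega>2 Y2) (utility (real n) c2 \<omega>2 Y2 \<omega>1 Y1) pp \<longleftrightarrow>
    fst pp \<ge> 0 \<and> snd pp \<ge> 0 \<and>
    price_foc k r (snd pp) (fst pp) \<and> price_foc k (1 / r) (fst pp) (snd pp)" for pp
    using revenue_maximal_iff_price_foc[OF k r, of "fst pp" "snd pp"]
      revenue_maximal_iff_price_foc[OF k r_inv_pos, of "snd pp" "fst pp"] assms(1)
    by (auto simp: is_NE_def Let_def utility_eq_revenue r_def[symmetric] r_inv k_def[symmetric])
  then show ?thesis
    using price_foc_pair_unique[OF k r] by simp
qed

end
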